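(* Let $Q=\sum_{i\in[m]}q_i\mathrm B(\sigma_i)\in\mathbb B_m$ with $0\le\sigma_1<\cdots<\sigma_m\le1/2$, and let $W=\sum_{j\in[n]}p_j\mathrm B(\varepsilon_j)\in\mathbb B_n$ be a $2n$-P-degradation of $Q$ with all $p_j>0$ and $\sigma_1\le\varepsilon_1\le\varepsilon_2\le\cdots\le\varepsilon_n\le\sigma_m$. Let $(k_{i,j})_{m\times n}$ be a 1-matrix of pattern $(q_1,\dots,q_m;p_1,\dots,p_n)$ with $\sum_{i\in[m]}k_{i,j}\sigma_i=p_j\varepsilon_j$ for all $j\in[n]$. For a nonnegative $m\times n$ matrix $(\kappa_{i,j})$ with column sums $\pi_j=\sum_i\kappa_{i,j}$, write $W[\kappa]=\sum_{j:\pi_j>0}\pi_j\mathrm B\big(\pi_j^{-1}\sum_i\kappa_{i,j}\sigma_i\big)$. 1. If $k_{i',j'}\neq0$ for some $i'\in[m]$, $j'\in[n-1]$ with $\sigma_{i'}\ge\varepsilon_{j'+1}$, let $k'$ be obtained from $k$ by setting $k'_{i',j'}=0$, $k'_{i',j'+1}=k_{i',j'+1}+k_{i',j'}$ and leaving all other entries unchanged. Then $W'=W[k']$ satisfies $W\preccurlyeq_{\mathrm P}W'\preccurlyeq_{\mathrm P}Q$. 2. If $k_{i'',j''}\neq0$ for some $i''\in[m]$, $2\le j''\le n$ with $\sigma_{i''}\le\varepsilon_{j''-1}$, let $k''$ be obtained from $k$ by setting $k''_{i'',j''}=0$, $k''_{i'',j''-1}=k_{i'',j''-1}+k_{i'',j''}$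 and leaving all other entries unchanged. Then $W''=W[k'']$ satisfies $W\preccurlyeq_{\mathrm P}W''\preccurlyeq_{\mathrm P}Q$. 3. If $k_{i_*,j^*}k_{i^*,j_*}\neq0$ for some $i_*,i^*\in[m]$, $j_*,j^*\in[n]$ with $\varepsilon_{j_*}\le\sigma_{i_*}<\sigma_{i^*}\le\varepsilon_{j^*}$, let $\delta=\min\{k_{i_*,j^*},k_{i^*,j_*}\}$ and let $k^*$ be obtained from $k$ by subtracting $\delta$ from the entries $(i_*,j^* )$ and $(i^*,j_* )$, adding $\delta$ to the entries $(i_*,j_* )$ and $(i^*,j^* )$, and leaving all other entries unchanged. Then $W^*=W[k^*]$ satisfies $W\preccurlyeq_{\mathrm P}W^*\preccurlyeq_{\mathrm P}Q$.
   Context: A BIDMC $W$ has input uniform on $\{0,1\}$, discrete output alphabet $\mathcal Y$ and transition probabilities $\Pr(y\mid x)$; its LR-profile is $P_W(\varepsilon)=\Pr\big(\mathcal L_W(y)=\varepsilon/(1-\varepsilon)\big)$ with $\mathcal L_W(\hat y)=\Pr(y=\hat y\mid x=0)/\Pr(y=\hat y\mid x=1)$, and $W\cong W'$ if LR-profiles coincide; channel identities are up to $\cong$. $W'\preccurlyeq W$ if there is a channel $T$ from the output alphabet of $W$ to that of $W'$ with $\Pr(y'\mid x'=a)=\sum_{y}\Pr(y\mid x=a)T(y'\mid y)$. $\mathrm B(\varepsilon)$ is the BSC with crossover probability $\varepsilon$; $\sum_iq_iW_i$ (with $(q_i)$ a probability vector) denotes the random switching channel (use $W_i$ with probability $q_i$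 independently of the input and output the index $i$ along with the output). $\mathbb B_n$ is the set of BIDMCs equivalent to $\sum_{i\in[n]}p_i\mathrm B(\varepsilon_i)$ for a probability vector $(p_i)$ and $\varepsilon_i\in[0,1]$. $P_\epsilon(W)=\frac12\sum_{y}\min\{\Pr(y\mid x=0),\Pr(y\mid x=1)\}$. For a symmetric BIDMC $Q$ and $n\ge1$, $W$ is a $2n$-P-degradation of $Q$, written $W\preccurlyeq_{\mathrm P}Q$, if $W\in\mathbb B_n$, $W\preccurlyeq Q$ and $P_\epsilon(W)=\min\{P_\epsilon(W'):W'\in\mathbb B_n,\ W'\preccurlyeq Q\}$. A 1-matrix of pattern $(q_1,\dots,q_m;p_1,\dots,p_n)$ is a matrix $(k_{i,j})_{m\times n}$ with $k_{i,j}\ge0$, $\sum_{j}k_{i,j}=q_i$ for all $i$ and $\sum_{i}k_{i,j}=p_j$ for all $j$. *)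

theory Defs
  imports "HOL-Probability.Probability"
begin

text \<open>A BIDMC: input alphabet {0,1} rendered as bool (False = 0, True = 1),
  discrete output alphabet rendered as nat; W x is the output distribution given input x.\<close>
type_synonym bidmc = "bool \<Rightarrow> nat pmf"

text \<open>LR value written as eps = Pr(y|0)/(Pr(y|0)+Pr(y|1)), i.e. L(y) = eps/(1-eps).\<close>
definition lr_eps :: "bidmc \<Rightarrow> nat \<Rightarrow> real" where
  "lr_eps W y = pmf (W False) y / (pmf (W False) y + pmf (W True) y)"

text \<open>LR-profile: probability (uniform input) that L_W(y) = eps/(1-eps).\<close>
definition lr_profile :: "bidmc \<Rightarrow> real \<Rightarrow> real" where
  "lr_profile W e =
     (measure_pmf.prob (W False) {y. lr_eps W y = e} + measure_pmf.prob (W True) {y. lr_eps W y = e}) / 2"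

definition ch_equiv :: "bidmc \<Rightarrow> bidmc \<Rightarrow> bool" where
  "ch_equiv W W' \<longleftrightarrow> lr_profile W = lr_profile W'"

definition degraded :: "bidmc \<Rightarrow> bidmc \<Rightarrow> bool" where
  "degraded W' W \<longleftrightarrow> (\<exists>T :: nat \<Rightarrow> nat pmf. \<forall>a. W' a = bind_pmf (W a) T)"

definition sym_channel :: "bidmc \<Rightarrow> bool" where
  "sym_channel Q \<longleftrightarrow> (\<exists>\<pi>. bij \<pi> \<and> (\<forall>y. \<pi> (\<pi> y) = y) \<and>
       (\<forall>y. pmf (Q False) y = pmf (Q True) (\<pi> y)))"

definition weights_pmf :: "nat \<Rightarrow> (nat \<Rightarrow> real) \<Rightarrow> nat pmf" where
  "weights_pmf n p = embed_pmf (\<lambda>i. if i < n then p i else 0)"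

definition prob_vec :: "nat \<Rightarrow> (nat \<Rightarrow> real) \<Rightarrow> bool" where
  "prob_vec n p \<longleftrightarrow> (\<forall>i<n. 0 \<le> p i) \<and> (\<Sum>i<n. p i) = 1"

text \<open>Random switching channel sum_{i<n} p i B(eps i); output (i, b) encoded as 2*i + b.\<close>
definition bsc_mix :: "nat \<Rightarrow> (nat \<Rightarrow> real) \<Rightarrow> (nat \<Rightarrow> real) \<Rightarrow> bidmc" where
  "bsc_mix n p eps x =
     bind_pmf (weights_pmf n p)
       (\<lambda>i. map_pmf (\<lambda>f. 2 * i + of_bool (f \<noteq> x)) (bernoulli_pmf (eps i)))"

definition in_B :: "nat \<Rightarrow> bidmc \<Rightarrow> bool" where
  "in_B n W \<longleftrightarrow> (\<exists>p eps. prob_vec n p \<and> (\<forall>i<n. 0 \<le> eps i \<and> eps i \<le> 1)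
                        \<and> ch_equiv W (bsc_mix n p eps))"

definition P_err :: "bidmc \<Rightarrow> real" where
  "P_err W = infsum (\<lambda>y. min (pmf (W False) y) (pmf (W True) y)) UNIV / 2"

definition P_degr :: "nat \<Rightarrow> bidmc \<Rightarrow> bidmc \<Rightarrow> bool" where
  "P_degr n W Q \<longleftrightarrow> sym_channel Q \<and> in_B n W \<and> degraded W Q \<and>
     (\<forall>W'. in_B n W' \<and> degraded W' Q \<longrightarrow> P_err W \<le> P_err W')"

definition one_matrix :: "nat \<Rightarrow> nat \<Rightarrow> (nat \<Rightarrow> real) \<Rightarrow> (nat \<Rightarrow> real) \<Rightarrow> (nat \<Rightarrow> nat \<Rightarrow> real) \<Rightarrow> bool" where
  "one_matrix m n q p k \<longleftrightarrow> (\<forall>i<m. \<forall>j<n. 0 \<le> k i j) \<and>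
     (\<forall>i<m. (\<Sum>j<n. k i j) = q i) \<and> (\<forall>j<n. (\<Sum>i<m. k i j) = p j)"

text \<open>W[kappa]: columns with zero sum get weight 0 (hence are irrelevant up to equivalence).\<close>
definition mat_channel :: "nat \<Rightarrow> nat \<Rightarrow> (nat \<Rightarrow> real) \<Rightarrow> (nat \<Rightarrow> nat \<Rightarrow> real) \<Rightarrow> bidmc" where
  "mat_channel m n \<sigma> \<kappa> = bsc_mix n (\<lambda>j. \<Sum>i<m. \<kappa> i j)
      (\<lambda>j. if (\<Sum>i<m. \<kappa> i j) > 0 then (\<Sum>i<m. \<kappa> i j * \<sigma> i) / (\<Sum>i<m. \<kappa> i j) else 0)"

end

(* Each of the three modifications moves mass between two columns a, b of the 1-matrix k, where
   \<epsilon> a \<le> \<epsilon> b, preserving the total weight and moment of the pair but pushing the column means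
   apart: the new means satisfy \<epsilon>' a \<le> \<epsilon> a and \<epsilon> b \<le> \<epsilon>' b. Each old sub-channel is then a mixture
   of the two new ones, so W arises from W' by merging sub-channels along a suitable 1-matrix, just
   as W' arises from Q by merging along the modified matrix; hence W \<preceq> W' \<preceq> Q. Merging can only
   increase the error probability, by concavity of e \<mapsto> min e (1 - e), so P_err W' \<le> P_err W, and the
   optimality of W among the channels of B_n degraded from Q gives both P-degradations. *)

theory Submission
  imports Defs
begin

lemma pmf_weights_pmf:
  assumes "prob_vec n w"
  shows "pmf (weights_pmf n w) i = (if i < n then w i else 0)"
proof -
  let ?f = "\<lambda>i. if i < n then w i else 0"
  have nonneg: "\<And>i. 0 \<le> ?f i" using assms by (auto simp: prob_vec_def)
  have "(\<integral>\<^sup>+x. ennreal (?f x) \<partial>count_space UNIV) = (\<Sum>x<n. ennreal (?f x))"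
    by (rule nn_integral_count_space') auto
  also have "\<dots> = ennreal (\<Sum>x<n. ?f x)" by (rule sum_ennreal) (rule nonneg)
  also have "(\<Sum>x<n. ?f x) = 1" using assms by (simp add: prob_vec_def)
  finally show ?thesis
    unfolding weights_pmf_def using pmf_embed_pmf[of ?f, OF nonneg] by simp
qed

lemma set_pmf_weights_pmf: "prob_vec n w \<Longrightarrow> i \<in> set_pmf (weights_pmf n w) \<Longrightarrow> i < n"
  using pmf_weights_pmf[of n w i] by (auto simp: set_pmf_eq split: if_splits)

lemma pmf_bind_weights_pmf:
  assumes "prob_vec n w"
  shows "pmf (bind_pmf (weights_pmf n w) f) y = (\<Sum>i<n. w i * pmf (f i) y)"
proof -
  have "pmf (bind_pmf (weights_pmf n w) f) y = (\<Sum>i<n. pmf (weights_pmf n w) i *\<^sub>R pmf (f i) y)"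
    unfolding pmf_bind
    by (rule integral_measure_pmf) (use set_pmf_weights_pmf[OF assms] in auto)
  then show ?thesis by (simp add: pmf_weights_pmf[OF assms])
qed

lemma pmf_bsc_mix_sum:
  assumes "prob_vec n p" "\<And>l. l < n \<Longrightarrow> 0 \<le> e l \<and> e l \<le> 1"
  shows "pmf (bsc_mix n p e x) y =
    (\<Sum>l<n. p l * (e l * of_bool (y = 2*l + of_bool (\<not> x)) + (1 - e l) * of_bool (y = 2*l + of_bool x)))"
  unfolding bsc_mix_def pmf_bind_weights_pmf[OF assms(1)]
proof (rule sum.cong[OF refl])
  fix l assume "l \<in> {..<n}"
  with assms(2) show "p l * pmf (map_pmf (\<lambda>f. 2 * l + of_bool (f \<noteq> x)) (bernoulli_pmf (e l))) y =
      p l * (e l * of_bool (y = 2*l + of_bool (\<not> x)) + (1 - e l) * of_bool (y = 2*l + of_bool x))"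
    unfolding map_pmf_def pmf_bind by (cases x) (auto simp: indicator_def)
qed

lemma pmf_bsc_mix:
  assumes "prob_vec n p" "\<And>l. l < n \<Longrightarrow> 0 \<le> e l \<and> e l \<le> 1"
  shows "pmf (bsc_mix n p e x) y =
    (if y div 2 < n then p (y div 2) * (if odd y = (\<not> x) then e (y div 2) else 1 - e (y div 2)) else 0)"
proof -
  have "(y = 2*l + 1) = (l = y div 2 \<and> odd y)" "(y = 2*l) = (l = y div 2 \<and> even y)" for l
    by presburger+
  then have "p l * (e l * of_bool (y = 2*l + of_bool (\<not> x)) + (1 - e l) * of_bool (y = 2*l + of_bool x))
     = (if l = y div 2 then p (y div 2) * (if odd y = (\<not> x) then e (y div 2) else 1 - e (y div 2)) else 0)"
    for l by (cases x) auto
  then show ?thesis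
    using pmf_bsc_mix_sum[OF assms, where x=x and y=y] by (simp add: sum.delta' del: One_nat_def)
qed

lemma sum_lessThan_double:
  fixes f :: "nat \<Rightarrow> 'a::comm_monoid_add"
  shows "(\<Sum>y<2*n. f y) = (\<Sum>i<n. f (2*i) + f (2*i+1))"
  by (induction n) (auto simp: ac_simps)

lemma P_err_bsc_mix:
  assumes "prob_vec n p" "\<And>l. l < n \<Longrightarrow> 0 \<le> e l \<and> e l \<le> 1"
  shows "P_err (bsc_mix n p e) = (\<Sum>l<n. p l * min (e l) (1 - e l))"
proof -
  let ?f = "\<lambda>y. min (pmf (bsc_mix n p e False) y) (pmf (bsc_mix n p e True) y)"
  have "infsum ?f UNIV = infsum ?f {..<2*n}"
    by (rule infsum_cong_neutral) (auto simp: pmf_bsc_mix[OF assms])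
  also have "\<dots> = (\<Sum>i<n. ?f (2*i) + ?f (2*i+1))" by (simp add: sum_lessThan_double)
  also have "\<dots> = (\<Sum>i<n. 2 * (p i * min (e i) (1 - e i)))"
  proof (rule sum.cong[OF refl])
    fix i assume "i \<in> {..<n}"
    moreover from this have "0 \<le> p i" using assms(1) by (auto simp: prob_vec_def)
    ultimately show "?f (2*i) + ?f (2*i+1) = 2 * (p i * min (e i) (1 - e i))"
      by (simp add: pmf_bsc_mix[OF assms] min_mult_distrib_left min.commute)
  qed
  finally show ?thesis unfolding P_err_def by (simp add: sum_distrib_left[symmetric])
qed

lemma sym_channel_bsc_mix:
  assumes "prob_vec n p" "\<And>l. l < n \<Longrightarrow> 0 \<le> e l \<and> e l \<le> 1"
  shows "sym_channel (bsc_mix n p e)"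
  unfolding sym_channel_def
proof (intro exI conjI allI)
  let ?\<pi> = "\<lambda>y::nat. if even y then y + 1 else y - 1"
  show inv: "?\<pi> (?\<pi> y) = y" for y by presburger
  show "bij ?\<pi>" by (rule involuntory_imp_bij) (rule inv)
  fix y
  have "?\<pi> y div 2 = y div 2" by presburger
  moreover have "odd (?\<pi> y) = even y" by auto
  ultimately show "pmf (bsc_mix n p e False) y = pmf (bsc_mix n p e True) (?\<pi> y)"
    by (simp only: pmf_bsc_mix[OF assms]) simp
qed

lemma in_B_bsc_mix:
  "prob_vec n p \<Longrightarrow> (\<And>l. l < n \<Longrightarrow> 0 \<le> e l \<and> e l \<le> 1) \<Longrightarrow> in_B n (bsc_mix n p e)"
  unfolding in_B_def ch_equiv_def by blast

lemma bsc_mix_cong: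
  assumes p: "prob_vec n p"
    and "\<And>j. j < n \<Longrightarrow> p j = p' j" and "\<And>j. j < n \<Longrightarrow> p j \<noteq> 0 \<Longrightarrow> e j = e' j"
  shows "bsc_mix n p e = bsc_mix n p' e'"
proof
  fix x
  have "(\<lambda>i. if i < n then p i else 0) = (\<lambda>i. if i < n then p' i else 0)" using assms(2) by auto
  then have weights: "weights_pmf n p = weights_pmf n p'" by (simp add: weights_pmf_def)
  show "bsc_mix n p e x = bsc_mix n p' e' x"
    unfolding bsc_mix_def weights[symmetric]
  proof (rule bind_pmf_cong[OF refl])
    fix i assume i: "i \<in> set_pmf (weights_pmf n p)"
    then have "i < n" by (rule set_pmf_weights_pmf[OF p])
    moreover have "p i \<noteq> 0" using i pmf_weights_pmf[OF p, of i] \<open>i < n\<close> by (simp add: set_pmf_eq)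
    ultimately show "map_pmf (\<lambda>f. 2 * i + of_bool (f \<noteq> x)) (bernoulli_pmf (e i)) =
        map_pmf (\<lambda>f. 2 * i + of_bool (f \<noteq> x)) (bernoulli_pmf (e' i))"
      using assms(3) by simp
  qed
qed

lemma degraded_trans: "degraded A B \<Longrightarrow> degraded B C \<Longrightarrow> degraded A C"
  unfolding degraded_def
proof (elim exE)
  fix T1 T2 assume "\<forall>a. A a = bind_pmf (B a) T1" "\<forall>a. B a = bind_pmf (C a) T2"
  then show "\<exists>T. \<forall>a. A a = bind_pmf (C a) T"
    by (intro exI[of _ "\<lambda>y. bind_pmf (T2 y) T1"]) (simp add: bind_assoc_pmf)
qed

lemma one_matrix_prob_vec:
  assumes "one_matrix m n q p k" "prob_vec m q"
  shows "prob_vec n p"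
proof -
  have "(\<Sum>j<n. p j) = (\<Sum>j<n. \<Sum>i<m. k i j)"
    using assms(1) by (simp add: one_matrix_def)
  also have "\<dots> = (\<Sum>i<m. \<Sum>j<n. k i j)" by (rule sum.swap)
  also have "\<dots> = 1" using assms by (simp add: one_matrix_def prob_vec_def)
  finally have "(\<Sum>j<n. p j) = 1" .
  moreover have "0 \<le> p j" if "j < n" for j
  proof -
    from assms(1) that have "p j = (\<Sum>i<m. k i j)" "\<forall>i<m. 0 \<le> k i j"
      by (auto simp: one_matrix_def)
    then show ?thesis by (auto intro: sum_nonneg)
  qed
  ultimately show ?thesis unfolding prob_vec_def by blast
qed

text \<open>Realises the merging of sub-channels along a 1-matrix R with row sums w; the value on
  sub-channels of weight 0 is irrelevant.\<close>
definition merge_kernel :: "nat \<Rightarrow> (nat \<Rightarrow> real) \<Rightarrow> (nat \<Rightarrow> nat \<Rightarrow> real) \<Rightarrow> nat \<Rightarrow> nat pmf" where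
  "merge_kernel n w R y =
     (if 0 < w (y div 2)
      then map_pmf (\<lambda>l. 2 * l + y mod 2) (weights_pmf n (\<lambda>l. R (y div 2) l / w (y div 2)))
      else return_pmf 0)"

lemma pmf_merge_kernel:
  assumes R_nonneg: "\<And>l. l < n \<Longrightarrow> 0 \<le> R j l" and R_row: "(\<Sum>l<n. R j l) = w j" and "b \<le> 1"
  shows "w j * pmf (merge_kernel n w R (2 * j + b)) y = (\<Sum>l<n. R j l * of_bool (y = 2 * l + b))"
proof (cases "0 < w j")
  case True
  have row: "prob_vec n (\<lambda>l. R j l / w j)"
    unfolding prob_vec_def using True R_nonneg R_row by (auto simp: sum_divide_distrib[symmetric])
  have "(2 * j + b) div 2 = j" "(2 * j + b) mod 2 = b" using \<open>b \<le> 1\<close> by auto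
  then have "pmf (merge_kernel n w R (2 * j + b)) y = (\<Sum>l<n. R j l / w j * of_bool (y = 2 * l + b))"
    unfolding merge_kernel_def map_pmf_def using True
    by (simp add: pmf_bind_weights_pmf[OF row] indicator_def eq_commute)
  then show ?thesis using True by (simp add: sum_distrib_left)
next
  case False
  then have "w j = 0" "\<forall>l\<in>{..<n}. R j l = 0"
    using R_row R_nonneg sum_nonneg[of "{..<n}" "R j"] sum_nonneg_eq_0_iff[of "{..<n}" "R j"] by auto
  then show ?thesis by simp
qed

lemma one_matrix_mean_complement:
  assumes "one_matrix N n p' p R" "l < n" "(\<Sum>j<N. R j l * e' j) = p l * e l"
  shows "(\<Sum>j<N. R j l * (1 - e' j)) = p l * (1 - e l)"
  using assms by (simp add: one_matrix_def algebra_simps sum_subtractf)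

lemma degraded_bsc_mix_merge:
  assumes p': "prob_vec N p'" and e'_range: "\<And>j. j < N \<Longrightarrow> 0 \<le> e' j \<and> e' j \<le> 1"
    and e_range: "\<And>l. l < n \<Longrightarrow> 0 \<le> e l \<and> e l \<le> 1"
    and R: "one_matrix N n p' p R"
    and R_mean: "\<And>l. l < n \<Longrightarrow> (\<Sum>j<N. R j l * e' j) = p l * e l"
  shows "degraded (bsc_mix n p e) (bsc_mix N p' e')"
proof -
  let ?T = "merge_kernel n p' R"
  have p: "prob_vec n p" by (rule one_matrix_prob_vec[OF R p'])
  have R_nonneg: "\<And>j l. j < N \<Longrightarrow> l < n \<Longrightarrow> 0 \<le> R j l"
    and R_row: "\<And>j. j < N \<Longrightarrow> (\<Sum>l<n. R j l) = p' j"
    using R by (auto simp: one_matrix_def)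
  have R_mean': "(\<Sum>j<N. R j l * (1 - e' j)) = p l * (1 - e l)" if "l < n" for l
    by (rule one_matrix_mean_complement[where e = e and e' = e', OF R that R_mean[OF that]])
  have "pmf (bind_pmf (bsc_mix N p' e' x) ?T) y = pmf (bsc_mix n p e x) y" for x y
  proof -
    let ?out = "\<lambda>l b. of_bool (y = 2 * l + of_bool b) :: real"
    have kernel: "p' j * pmf (?T (2 * j + of_bool b)) y = (\<Sum>l<n. R j l * ?out l b)" if "j < N" for j b
      using pmf_merge_kernel[of n R j p' "of_bool b"] R_nonneg[OF that] R_row[OF that] by simp
    have "pmf (bind_pmf (bsc_mix N p' e' x) ?T) y =
        (\<Sum>j<N. p' j * (e' j * pmf (?T (2 * j + of_bool (\<not> x))) y
                        + (1 - e' j) * pmf (?T (2 * j + of_bool x)) y))"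
      unfolding bsc_mix_def bind_assoc_pmf pmf_bind_weights_pmf[OF p'] bind_map_pmf
      by (rule sum.cong[OF refl]) (simp add: pmf_bind e'_range)
    also have "\<dots> = (\<Sum>j<N. e' j * (p' j * pmf (?T (2 * j + of_bool (\<not> x))) y)
                        + (1 - e' j) * (p' j * pmf (?T (2 * j + of_bool x)) y))"
      by (simp add: algebra_simps)
    also have "\<dots> = (\<Sum>j<N. e' j * (\<Sum>l<n. R j l * ?out l (\<not> x)) + (1 - e' j) * (\<Sum>l<n. R j l * ?out l x))"
      by (rule sum.cong[OF refl]) (simp add: kernel)
    also have "\<dots> = (\<Sum>j<N. \<Sum>l<n. R j l * e' j * ?out l (\<not> x) + R j l * (1 - e' j) * ?out l x)"
      by (rule sum.cong[OF refl]) (simp only: sum_distrib_left sum.distrib mult_ac)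
    also have "\<dots> = (\<Sum>l<n. (\<Sum>j<N. R j l * e' j) * ?out l (\<not> x) + (\<Sum>j<N. R j l * (1 - e' j)) * ?out l x)"
      by (subst sum.swap) (simp add: sum_distrib_right sum.distrib)
    also have "\<dots> = (\<Sum>l<n. p l * (e l * ?out l (\<not> x) + (1 - e l) * ?out l x))"
      by (rule sum.cong[OF refl]) (simp add: R_mean R_mean')
    also have "\<dots> = pmf (bsc_mix n p e x) y" by (simp add: pmf_bsc_mix_sum[OF p e_range])
    finally show ?thesis .
  qed
  then show ?thesis unfolding degraded_def by (metis pmf_eqI)
qed

lemma P_err_bsc_mix_merge_le:
  assumes p': "prob_vec N p'" and e'_range: "\<And>j. j < N \<Longrightarrow> 0 \<le> e' j \<and> e' j \<le> 1"
    and e_range: "\<And>l. l < n \<Longrightarrow> 0 \<le> e l \<and> e l \<le> 1"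
    and R: "one_matrix N n p' p R"
    and R_mean: "\<And>l. l < n \<Longrightarrow> (\<Sum>j<N. R j l * e' j) = p l * e l"
  shows "P_err (bsc_mix N p' e') \<le> P_err (bsc_mix n p e)"
proof -
  have p: "prob_vec n p" by (rule one_matrix_prob_vec[OF R p'])
  have R_nonneg: "\<And>j l. j < N \<Longrightarrow> l < n \<Longrightarrow> 0 \<le> R j l"
    and R_row: "\<And>j. j < N \<Longrightarrow> (\<Sum>l<n. R j l) = p' j"
    using R by (auto simp: one_matrix_def)
  have R_mean': "(\<Sum>j<N. R j l * (1 - e' j)) = p l * (1 - e l)" if "l < n" for l
    by (rule one_matrix_mean_complement[where e = e and e' = e', OF R that R_mean[OF that]])
  have "P_err (bsc_mix N p' e') = (\<Sum>j<N. p' j * min (e' j) (1 - e' j))"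
    by (rule P_err_bsc_mix[OF p' e'_range])
  also have "\<dots> = (\<Sum>j<N. \<Sum>l<n. R j l * min (e' j) (1 - e' j))"
    by (rule sum.cong[OF refl]) (simp add: R_row[symmetric] sum_distrib_right)
  also have "\<dots> = (\<Sum>l<n. \<Sum>j<N. R j l * min (e' j) (1 - e' j))" by (rule sum.swap)
  \<comment> \<open>concavity of min\<close>
  also have "\<dots> \<le> (\<Sum>l<n. min (\<Sum>j<N. R j l * e' j) (\<Sum>j<N. R j l * (1 - e' j)))"
    by (intro sum_mono min.boundedI) (auto intro!: sum_mono mult_left_mono R_nonneg)
  also have "\<dots> = (\<Sum>l<n. p l * min (e l) (1 - e l))"
    using p by (auto simp: R_mean R_mean' min_mult_distrib_left prob_vec_def intro!: sum.cong)
  also have "\<dots> = P_err (bsc_mix n p e)" by (rule P_err_bsc_mix[OF p e_range, symmetric])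
  finally show ?thesis .
qed

text \<open>A sub-channel of weight pa and mean ea, lying between u and v, is split into the weight \<alpha>
  at u and pa - \<alpha> at v, within the available weights A at u and B at v.\<close>
lemma convex_split_exists:
  fixes A B pa pb u v ea eb :: real
  assumes A: "0 \<le> A" and B: "0 \<le> B" and pa: "0 < pa" and pb: "0 < pb"
    and mass: "A + B = pa + pb" and moment: "A * u + B * v = pa * ea + pb * eb"
    and order: "u \<le> ea" "ea \<le> eb" "eb \<le> v"
  shows "\<exists>\<alpha>. 0 \<le> \<alpha> \<and> \<alpha> \<le> pa \<and> \<alpha> \<le> A \<and> pa - \<alpha> \<le> B \<and> \<alpha> * u + (pa - \<alpha>) * v = pa * ea"
proof (cases "u < v")
  case True
  define \<alpha> where "\<alpha> = pa * (v - ea) / (v - u)"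
  have d: "0 < v - u" using True by simp
  have A': "A * (v - u) = pa * (v - ea) + pb * (v - eb)" using mass moment by algebra
  have B': "B * (v - u) = pa * (ea - u) + pb * (eb - u)" using mass moment by algebra
  have compl: "pa - \<alpha> = pa * (ea - u) / (v - u)" unfolding \<alpha>_def using d by (simp add: field_simps)
  have "0 \<le> \<alpha>" "\<alpha> \<le> pa" "\<alpha> \<le> A" "pa - \<alpha> \<le> B"
    unfolding compl unfolding \<alpha>_def using d pa pb order A' B'
    by (auto simp: divide_le_eq mult_left_mono)
  moreover have "\<alpha> * u + (pa - \<alpha>) * v = pa * ((v - ea) * u + (ea - u) * v) / (v - u)"
    unfolding compl unfolding \<alpha>_def by (simp add: add_divide_distrib[symmetric] algebra_simps)
  moreover have "(v - ea) * u + (ea - u) * v = ea * (v - u)" by algebra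
  ultimately show ?thesis using d by auto
next
  case False
  then have "ea = u" "eb = u" "v = u" using order by auto
  define \<alpha> where "\<alpha> = pa * A / (A + B)"
  have s: "0 < A + B" using mass pa pb by simp
  have compl: "pa - \<alpha> = pa * B / (A + B)" unfolding \<alpha>_def using s by (simp add: field_simps)
  have "pa * A \<le> A * (A + B)" "pa * B \<le> B * (A + B)"
    using mass A B pb by (simp_all add: mult_left_mono algebra_simps)
  then have "0 \<le> \<alpha>" "\<alpha> \<le> pa" "\<alpha> \<le> A" "pa - \<alpha> \<le> B"
    unfolding compl unfolding \<alpha>_def using s pa A B by (auto simp: divide_le_eq mult_left_mono)
  moreover have "\<alpha> * u + (pa - \<alpha>) * v = pa * ea" using \<open>ea = u\<close> \<open>v = u\<close> by (simp add: algebra_simps)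
  ultimately show ?thesis by blast
qed

lemma sum_lessThan_two_terms:
  fixes g :: "nat \<Rightarrow> 'a::comm_monoid_add"
  assumes "a \<noteq> b" "a < n" "b < n" "\<And>l. l < n \<Longrightarrow> l \<noteq> a \<Longrightarrow> l \<noteq> b \<Longrightarrow> g l = 0"
  shows "(\<Sum>l<n. g l) = g a + g b"
proof -
  have "(\<Sum>l<n. g l) = (\<Sum>l\<in>{a, b}. g l)"
    by (rule sum.mono_neutral_right) (use assms in auto)
  then show ?thesis using assms(1) by simp
qed

lemma one_matrix_two_columns_exists:
  fixes p p' e f :: "nat \<Rightarrow> real"
  assumes ab: "a \<noteq> b" "a < n" "b < n"
    and p_nonneg: "\<And>j. j < n \<Longrightarrow> 0 \<le> p j" and p'_nonneg: "\<And>j. j < n \<Longrightarrow> 0 \<le> p' j"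
    and pa: "0 < p a" and pb: "0 < p b"
    and others: "\<And>j. j < n \<Longrightarrow> j \<noteq> a \<Longrightarrow> j \<noteq> b \<Longrightarrow> p' j = p j \<and> f j = e j"
    and mass: "p' a + p' b = p a + p b"
    and moment: "p' a * f a + p' b * f b = p a * e a + p b * e b"
    and order: "f a \<le> e a" "e a \<le> e b" "e b \<le> f b"
  shows "\<exists>R. one_matrix n n p' p R \<and> (\<forall>l<n. (\<Sum>j<n. R j l * f j) = p l * e l)"
proof -
  obtain \<alpha> where \<alpha>: "0 \<le> \<alpha>" "\<alpha> \<le> p a" "\<alpha> \<le> p' a" "p a - \<alpha> \<le> p' b"
      "\<alpha> * f a + (p a - \<alpha>) * f b = p a * e a"
    using convex_split_exists[OF p'_nonneg[OF ab(2)] p'_nonneg[OF ab(3)] pa pb mass moment order]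
    by blast
  define R where "R j l =
    (if j = a \<and> l = a then \<alpha> else if j = b \<and> l = a then p a - \<alpha>
     else if j = a \<and> l = b then p' a - \<alpha> else if j = b \<and> l = b then p' b - p a + \<alpha>
     else if j = l then p j else 0)" for j l
  have R_ab: "R a a = \<alpha>" "R b a = p a - \<alpha>" "R a b = p' a - \<alpha>" "R b b = p' b - p a + \<alpha>"
    using ab(1) by (simp_all add: R_def)
  have R_diag: "R j l = (if j = l then p j else 0)" if "j \<notin> {a, b} \<or> l \<notin> {a, b}" for j l
    using that unfolding R_def by (elim disjE) simp_all
  have R_nonneg: "0 \<le> R j l" if "j < n" "l < n" for j l
    using that \<alpha>(1-4) p_nonneg[of j] unfolding R_def by (cases "j = l") simp_all
  have R_row: "(\<Sum>l<n. R j l) = p' j" if j: "j < n" for j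
  proof (cases "j \<in> {a, b}")
    case True
    then have "(\<Sum>l<n. R j l) = R j a + R j b"
      by (intro sum_lessThan_two_terms[OF ab]) (use R_diag in force)
    with True show ?thesis using R_ab by auto
  next
    case False
    then show ?thesis using j others by (simp add: R_diag)
  qed
  have R_col: "(\<Sum>j<n. R j l) = p l \<and> (\<Sum>j<n. R j l * f j) = p l * e l" if l: "l < n" for l
  proof (cases "l \<in> {a, b}")
    case True
    then have "(\<Sum>j<n. R j l) = R a l + R b l" "(\<Sum>j<n. R j l * f j) = R a l * f a + R b l * f b"
      by (intro sum_lessThan_two_terms[OF ab]; use R_diag in force)+
    moreover have "(p' a - \<alpha>) * f a + (p' b - p a + \<alpha>) * f b = p b * e b"
      using moment \<alpha>(5) by (simp add: algebra_simps)
    ultimately show ?thesis using True R_ab mass \<alpha>(5) by auto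
  next
    case False
    then have "R j l = (if j = l then p l else 0)" for j using R_diag by auto
    moreover have "f l = e l" using others l False by auto
    ultimately have "R j l = (if j = l then p l else 0)" "R j l * f j = (if j = l then p l * e l else 0)"
      for j by simp_all
    then show ?thesis using l by simp
  qed
  have "one_matrix n n p' p R" unfolding one_matrix_def using R_nonneg R_row R_col by blast
  then show ?thesis using R_col by blast
qed

text \<open>Spreading the crossover probabilities of two sub-channels apart, with weight and moment
  preserved, makes each old sub-channel a mixture of the two new ones.\<close>
lemma degraded_bsc_mix_spread:
  fixes p p' e e' :: "nat \<Rightarrow> real"
  assumes p: "prob_vec n p" and p': "prob_vec n p'"
    and e_range: "\<And>l. l < n \<Longrightarrow> 0 \<le> e l \<and> e l \<le> 1"
    and e'_range: "\<And>l. l < n \<Longrightarrow> 0 \<le> e' l \<and> e' l \<le> 1"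
    and ab: "a \<noteq> b" "a < n" "b < n" and pa: "0 < p a" and pb: "0 < p b"
    and others: "\<And>j. j < n \<Longrightarrow> j \<noteq> a \<Longrightarrow> j \<noteq> b \<Longrightarrow> p' j = p j \<and> e' j = e j"
    and mass: "p' a + p' b = p a + p b"
    and moment: "p' a * e' a + p' b * e' b = p a * e a + p b * e b"
    and lower: "p' a * e' a \<le> p' a * e a" and upper: "p' b * e b \<le> p' b * e' b"
    and e_ab: "e a \<le> e b"
  shows "degraded (bsc_mix n p e) (bsc_mix n p' e') \<and> P_err (bsc_mix n p' e') \<le> P_err (bsc_mix n p e)"
proof -
  have p_nonneg: "\<And>j. j < n \<Longrightarrow> 0 \<le> p j" and p'_nonneg: "\<And>j. j < n \<Longrightarrow> 0 \<le> p' j"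
    using p p' by (auto simp: prob_vec_def)
  \<comment> \<open>A sub-channel of weight 0 may be given any crossover probability; the old one puts it on
    the correct side.\<close>
  define f where "f j = (if j = a \<and> p' a = 0 then e a else if j = b \<and> p' b = 0 then e b else e' j)" for j
  have W': "bsc_mix n p' e' = bsc_mix n p' f"
    by (rule bsc_mix_cong[OF p']) (auto simp: f_def)
  have f_range: "\<And>l. l < n \<Longrightarrow> 0 \<le> f l \<and> f l \<le> 1"
    unfolding f_def using e_range e'_range ab by auto
  have f_a: "f a \<le> e a"
  proof (cases "p' a = 0")
    case False
    with p'_nonneg[OF ab(2)] have "0 < p' a" by simp
    with lower ab(1) show ?thesis by (simp add: f_def)
  qed (simp add: f_def)
  have f_b: "e b \<le> f b"
  proof (cases "p' b = 0")
    case False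
    with p'_nonneg[OF ab(3)] have "0 < p' b" by simp
    with upper ab(1) show ?thesis by (simp add: f_def)
  qed (simp add: f_def)
  have f_moment: "p' a * f a + p' b * f b = p a * e a + p b * e b"
    unfolding f_def using moment ab(1) by auto
  have f_others: "\<And>j. j < n \<Longrightarrow> j \<noteq> a \<Longrightarrow> j \<noteq> b \<Longrightarrow> p' j = p j \<and> f j = e j"
    using others by (simp add: f_def)
  obtain R where R: "one_matrix n n p' p R" "\<And>l. l < n \<Longrightarrow> (\<Sum>j<n. R j l * f j) = p l * e l"
    using one_matrix_two_columns_exists[OF ab p_nonneg p'_nonneg pa pb f_others mass f_moment f_a e_ab f_b]
    by blast
  show ?thesis unfolding W'
    using degraded_bsc_mix_merge[OF p' f_range e_range R] P_err_bsc_mix_merge_le[OF p' f_range e_range R]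
    by blast
qed

definition col_weight :: "nat \<Rightarrow> (nat \<Rightarrow> nat \<Rightarrow> real) \<Rightarrow> nat \<Rightarrow> real" where
  "col_weight m \<kappa> j = (\<Sum>i<m. \<kappa> i j)"

definition col_mean :: "nat \<Rightarrow> (nat \<Rightarrow> real) \<Rightarrow> (nat \<Rightarrow> nat \<Rightarrow> real) \<Rightarrow> nat \<Rightarrow> real" where
  "col_mean m \<sigma> \<kappa> j = (if 0 < col_weight m \<kappa> j then (\<Sum>i<m. \<kappa> i j * \<sigma> i) / col_weight m \<kappa> j else 0)"

lemma mat_channel_eq_bsc_mix: "mat_channel m n \<sigma> \<kappa> = bsc_mix n (col_weight m \<kappa>) (col_mean m \<sigma> \<kappa>)"
  unfolding mat_channel_def col_weight_def[abs_def] col_mean_def[abs_def] ..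

lemma weighted_sum_bounds:
  fixes w \<sigma> :: "nat \<Rightarrow> real"
  assumes "\<And>i. i \<in> A \<Longrightarrow> 0 \<le> w i" and "\<And>i. i \<in> A \<Longrightarrow> 0 \<le> \<sigma> i \<and> \<sigma> i \<le> 1"
  shows "0 \<le> (\<Sum>i\<in>A. w i * \<sigma> i) \<and> (\<Sum>i\<in>A. w i * \<sigma> i) \<le> sum w A"
  using assms by (auto intro!: sum_nonneg sum_mono mult_left_le)

lemma col_weight_mult_mean:
  assumes "\<And>i. i < m \<Longrightarrow> 0 \<le> \<kappa> i j"
  shows "col_weight m \<kappa> j * col_mean m \<sigma> \<kappa> j = (\<Sum>i<m. \<kappa> i j * \<sigma> i)"
proof (cases "0 < col_weight m \<kappa> j")
  case False
  moreover have "0 \<le> col_weight m \<kappa> j" unfolding col_weight_def using assms by (auto intro: sum_nonneg)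
  ultimately have "\<forall>i\<in>{..<m}. \<kappa> i j = 0"
    using assms sum_nonneg_eq_0_iff[of "{..<m}" "\<lambda>i. \<kappa> i j"] by (simp add: col_weight_def)
  then show ?thesis by (simp add: col_mean_def)
qed (simp add: col_mean_def)

lemma col_mean_bounds:
  assumes "\<And>i. i < m \<Longrightarrow> 0 \<le> \<kappa> i j" and "\<And>i. i < m \<Longrightarrow> 0 \<le> \<sigma> i \<and> \<sigma> i \<le> 1"
  shows "0 \<le> col_mean m \<sigma> \<kappa> j \<and> col_mean m \<sigma> \<kappa> j \<le> 1"
  using weighted_sum_bounds[of "{..<m}" "\<lambda>i. \<kappa> i j" \<sigma>] assms
  by (simp add: col_mean_def col_weight_def)

lemma P_degr_intermediate:
  assumes "P_degr n W Q" and "in_B n W'" and "sym_channel W'"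
    and "degraded W W'" and "degraded W' Q" and "P_err W' \<le> P_err W"
  shows "P_degr n W W' \<and> P_degr n W' Q"
  using assms degraded_trans order_trans unfolding P_degr_def by meson

definition column_transfer :: "(nat \<Rightarrow> nat \<Rightarrow> real) \<Rightarrow> nat \<Rightarrow> nat \<Rightarrow> (nat \<Rightarrow> real) \<Rightarrow> nat \<Rightarrow> nat \<Rightarrow> real" where
  "column_transfer k a b D i j = (if j = a then k i j - D i else if j = b then k i j + D i else k i j)"

lemma sum_column_transfer_row:
  assumes "a \<noteq> b" "a < n" "b < n"
  shows "(\<Sum>j<n. column_transfer k a b D i j) = (\<Sum>j<n. k i j)"
proof -
  have "column_transfer k a b D i j = k i j - (if j = a then D i else 0) + (if j = b then D i else 0)" for j
    using assms(1) by (simp add: column_transfer_def)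
  then show ?thesis using assms by (simp add: sum.distrib sum_subtractf)
qed

locale one_matrix_degradation =
  fixes m n :: nat and q \<sigma> p \<epsilon> :: "nat \<Rightarrow> real" and k :: "nat \<Rightarrow> nat \<Rightarrow> real"
  assumes q: "prob_vec m q"
    and \<sigma>_range: "\<And>i. i < m \<Longrightarrow> 0 \<le> \<sigma> i \<and> \<sigma> i \<le> 1"
    and p: "prob_vec n p" and p_pos: "\<And>j. j < n \<Longrightarrow> 0 < p j"
    and optimal: "P_degr n (bsc_mix n p \<epsilon>) (bsc_mix m q \<sigma>)"
    and k: "one_matrix m n q p k"
    and k_moment: "\<And>j. j < n \<Longrightarrow> (\<Sum>i<m. k i j * \<sigma> i) = p j * \<epsilon> j"
begin

lemma k_nonneg: "i < m \<Longrightarrow> j < n \<Longrightarrow> 0 \<le> k i j"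
  and k_row_sum: "i < m \<Longrightarrow> (\<Sum>j<n. k i j) = q i"
  and k_col_sum: "j < n \<Longrightarrow> (\<Sum>i<m. k i j) = p j"
  using k by (simp_all add: one_matrix_def)

lemma \<epsilon>_range:
  assumes "j < n" shows "0 \<le> \<epsilon> j \<and> \<epsilon> j \<le> 1"
proof -
  have "0 \<le> p j * \<epsilon> j \<and> p j * \<epsilon> j \<le> p j * 1"
    using weighted_sum_bounds[of "{..<m}" "\<lambda>i. k i j" \<sigma>] k_nonneg \<sigma>_range assms
    by (simp add: k_moment k_col_sum)
  then show ?thesis using p_pos[OF assms] by (simp add: zero_le_mult_iff)
qed

text \<open>The two moment hypotheses say that the new means of columns a and b straddle the old ones.\<close>
lemma P_degr_column_transfer:
  assumes ab: "a \<noteq> b" "a < n" "b < n" and \<epsilon>_ab: "\<epsilon> a \<le> \<epsilon> b"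
    and D_le: "\<And>i. i < m \<Longrightarrow> D i \<le> k i a" and D_ge: "\<And>i. i < m \<Longrightarrow> - D i \<le> k i b"
    and moment_ge_a: "(\<Sum>i<m. D i) * \<epsilon> a \<le> (\<Sum>i<m. D i * \<sigma> i)"
    and moment_ge_b: "(\<Sum>i<m. D i) * \<epsilon> b \<le> (\<Sum>i<m. D i * \<sigma> i)"
  shows "P_degr n (bsc_mix n p \<epsilon>) (mat_channel m n \<sigma> (column_transfer k a b D))
    \<and> P_degr n (mat_channel m n \<sigma> (column_transfer k a b D)) (bsc_mix m q \<sigma>)"
proof -
  define \<kappa> where "\<kappa> = column_transfer k a b D"
  define p' where "p' = col_weight m \<kappa>"
  define e' where "e' = col_mean m \<sigma> \<kappa>"
  have \<kappa>_nonneg: "0 \<le> \<kappa> i j" if "i < m" "j < n" for i j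
    using k_nonneg[OF that] D_le[OF that(1)] D_ge[OF that(1)] by (simp add: \<kappa>_def column_transfer_def)
  have \<kappa>: "one_matrix m n q p' \<kappa>"
    using \<kappa>_nonneg sum_column_transfer_row[OF ab] k_row_sum
    by (simp add: one_matrix_def \<kappa>_def p'_def col_weight_def)
  have p': "prob_vec n p'" by (rule one_matrix_prob_vec[OF \<kappa> q])
  have e'_range: "0 \<le> e' j \<and> e' j \<le> 1" if "j < n" for j
    unfolding e'_def using col_mean_bounds \<kappa>_nonneg that \<sigma>_range by blast
  have moment: "p' j * e' j = (\<Sum>i<m. \<kappa> i j * \<sigma> i)" if "j < n" for j
    unfolding p'_def e'_def using col_weight_mult_mean \<kappa>_nonneg that by blast
  have \<kappa>_a: "\<kappa> i a = k i a - D i" and \<kappa>_b: "\<kappa> i b = k i b + D i"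
    and \<kappa>_other: "j \<noteq> a \<Longrightarrow> j \<noteq> b \<Longrightarrow> \<kappa> i j = k i j" for i j
    using ab(1) by (simp_all add: \<kappa>_def column_transfer_def)
  have weight_a: "p' a = p a - (\<Sum>i<m. D i)" and weight_b: "p' b = p b + (\<Sum>i<m. D i)"
    using ab by (simp_all add: p'_def col_weight_def \<kappa>_a \<kappa>_b sum_subtractf sum.distrib k_col_sum)
  have moment_a: "p' a * e' a = p a * \<epsilon> a - (\<Sum>i<m. D i * \<sigma> i)"
    and moment_b: "p' b * e' b = p b * \<epsilon> b + (\<Sum>i<m. D i * \<sigma> i)"
    using ab by (simp_all add: moment \<kappa>_a \<kappa>_b left_diff_distrib distrib_right sum_subtractf
        sum.distrib k_moment)
  have others: "p' j = p j \<and> e' j = \<epsilon> j" if "j < n" "j \<noteq> a" "j \<noteq> b" for j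
  proof -
    have "p' j = p j" using that by (simp add: p'_def col_weight_def \<kappa>_other k_col_sum)
    moreover have "p' j * e' j = p j * \<epsilon> j" using that by (simp add: moment \<kappa>_other k_moment)
    ultimately show ?thesis using p_pos[OF that(1)] by simp
  qed
  have "degraded (bsc_mix n p \<epsilon>) (bsc_mix n p' e') \<and> P_err (bsc_mix n p' e') \<le> P_err (bsc_mix n p \<epsilon>)"
  proof (rule degraded_bsc_mix_spread[OF p p' \<epsilon>_range e'_range ab p_pos[OF ab(2)] p_pos[OF ab(3)] others])
    show "p' a + p' b = p a + p b" by (simp add: weight_a weight_b)
    show "p' a * e' a + p' b * e' b = p a * \<epsilon> a + p b * \<epsilon> b" by (simp add: moment_a moment_b)
    show "p' a * e' a \<le> p' a * \<epsilon> a"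
      using moment_ge_a unfolding moment_a by (simp add: weight_a algebra_simps)
    show "p' b * \<epsilon> b \<le> p' b * e' b"
      using moment_ge_b unfolding moment_b by (simp add: weight_b algebra_simps)
  qed (use \<epsilon>_ab in auto)
  moreover have "degraded (bsc_mix n p' e') (bsc_mix m q \<sigma>)"
    using moment by (intro degraded_bsc_mix_merge[OF q _ _ \<kappa>]) (simp_all add: \<sigma>_range e'_range)
  ultimately show ?thesis
    unfolding \<kappa>_def[symmetric] mat_channel_eq_bsc_mix p'_def[symmetric] e'_def[symmetric]
    using p' e'_range by (intro P_degr_intermediate[OF optimal] in_B_bsc_mix sym_channel_bsc_mix) auto
qed

lemma P_degr_move_entry:
  assumes "i\<^sub>0 < m" "s \<noteq> t" "s < n" "t < n"
    and between: "\<epsilon> s \<le> \<epsilon> t \<and> \<epsilon> t \<le> \<sigma> i\<^sub>0 \<or> \<sigma> i\<^sub>0 \<le> \<epsilon> t \<and> \<epsilon> t \<le> \<epsilon> s"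
  defines "\<kappa> \<equiv> \<lambda>i j. if i = i\<^sub>0 \<and> j = s then 0 else if i = i\<^sub>0 \<and> j = t then k i\<^sub>0 t + k i\<^sub>0 s else k i j"
  shows "P_degr n (bsc_mix n p \<epsilon>) (mat_channel m n \<sigma> \<kappa>) \<and> P_degr n (mat_channel m n \<sigma> \<kappa>) (bsc_mix m q \<sigma>)"
proof -
  let ?c = "k i\<^sub>0 s"
  have c: "0 \<le> ?c" and c_t: "- ?c \<le> k i\<^sub>0 t"
    using k_nonneg[OF assms(1,3)] k_nonneg[OF assms(1,4)] by simp_all
  have single: "(\<Sum>i<m. if i = i\<^sub>0 then x else 0) = x"
    "(\<Sum>i<m. (if i = i\<^sub>0 then x else 0) * \<sigma> i) = x * \<sigma> i\<^sub>0" for x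
    using assms(1) by (simp_all add: if_distrib[of "\<lambda>y. y * _"] cong: if_cong)
  from between consider (up) "\<epsilon> s \<le> \<epsilon> t" "\<epsilon> t \<le> \<sigma> i\<^sub>0" | (down) "\<sigma> i\<^sub>0 \<le> \<epsilon> t" "\<epsilon> t \<le> \<epsilon> s"
    by blast
  then show ?thesis
  proof cases
    case up
    have "\<kappa> = column_transfer k s t (\<lambda>i. if i = i\<^sub>0 then ?c else 0)"
      using assms(2) by (auto simp: \<kappa>_def column_transfer_def fun_eq_iff)
    then show ?thesis
      by (simp only:, intro P_degr_column_transfer)
        (use up c c_t assms k_nonneg in \<open>auto simp: single intro: mult_left_mono\<close>)
  next
    case down
    have "\<kappa> = column_transfer k t s (\<lambda>i. if i = i\<^sub>0 then - ?c else 0)"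
      using assms(2) by (auto simp: \<kappa>_def column_transfer_def fun_eq_iff)
    then show ?thesis
      by (simp only:, intro P_degr_column_transfer)
        (use down c c_t assms k_nonneg in \<open>auto simp: single intro: mult_left_mono\<close>)
  qed
qed

lemma P_degr_exchange:
  assumes "i\<^sub>l < m" "i\<^sub>u < m" "j\<^sub>l < n" "j\<^sub>u < n"
    and order: "\<epsilon> j\<^sub>l \<le> \<sigma> i\<^sub>l" "\<sigma> i\<^sub>l < \<sigma> i\<^sub>u" "\<sigma> i\<^sub>u \<le> \<epsilon> j\<^sub>u"
    and \<delta>: "0 \<le> \<delta>" "\<delta> \<le> k i\<^sub>l j\<^sub>u" "\<delta> \<le> k i\<^sub>u j\<^sub>l"
  defines "ks \<equiv> \<lambda>i j. k i j
                    - (if (i, j) = (i\<^sub>l, j\<^sub>u) then \<delta> else 0)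
                    - (if (i, j) = (i\<^sub>u, j\<^sub>l) then \<delta> else 0)
                    + (if (i, j) = (i\<^sub>l, j\<^sub>l) then \<delta> else 0)
                    + (if (i, j) = (i\<^sub>u, j\<^sub>u) then \<delta> else 0)"
  shows "P_degr n (bsc_mix n p \<epsilon>) (mat_channel m n \<sigma> ks) \<and> P_degr n (mat_channel m n \<sigma> ks) (bsc_mix m q \<sigma>)"
proof -
  let ?D = "\<lambda>i. (if i = i\<^sub>u then \<delta> else 0) - (if i = i\<^sub>l then \<delta> else 0)"
  have ne: "i\<^sub>l \<noteq> i\<^sub>u" "j\<^sub>l \<noteq> j\<^sub>u" using order by auto
  then have ks: "ks = column_transfer k j\<^sub>l j\<^sub>u ?D"
    by (auto simp: ks_def column_transfer_def fun_eq_iff)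
  have "- \<delta> \<le> k i\<^sub>l j\<^sub>l" "- \<delta> \<le> k i\<^sub>u j\<^sub>u"
    using \<delta>(1) k_nonneg[OF assms(1,3)] k_nonneg[OF assms(2,4)] by simp_all
  moreover have "(\<Sum>i<m. ?D i) = 0" using assms(1,2) by (simp add: sum_subtractf)
  moreover have "(\<Sum>i<m. ?D i * \<sigma> i) = \<delta> * (\<sigma> i\<^sub>u - \<sigma> i\<^sub>l)"
    using assms(1,2) by (simp add: left_diff_distrib sum_subtractf if_distrib[of "\<lambda>y. y * _"]
        right_diff_distrib cong: if_cong)
  moreover have "0 \<le> \<delta> * (\<sigma> i\<^sub>u - \<sigma> i\<^sub>l)" using \<delta>(1) order(2) by simp
  ultimately show ?thesis
    unfolding ks by (intro P_degr_column_transfer) (use assms ne k_nonneg order in auto)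
qed

end

theorem lemma6:
  fixes m n :: nat and q \<sigma> p \<epsilon> :: "nat \<Rightarrow> real" and k :: "nat \<Rightarrow> nat \<Rightarrow> real"
  assumes q: "prob_vec m q"
    and \<sigma>_mono: "\<And>i i'. i < i' \<Longrightarrow> i' < m \<Longrightarrow> \<sigma> i < \<sigma> i'"
    and \<sigma>_lo: "0 \<le> \<sigma> 0" and \<sigma>_hi: "\<sigma> (m - 1) \<le> 1/2"
    and p: "prob_vec n p" and p_pos: "\<And>j. j < n \<Longrightarrow> p j > 0"
    and \<epsilon>_mono: "\<And>j j'. j \<le> j' \<Longrightarrow> j' < n \<Longrightarrow> \<epsilon> j \<le> \<epsilon> j'"
    and \<epsilon>_lo: "\<sigma> 0 \<le> \<epsilon> 0" and \<epsilon>_hi: "\<epsilon> (n - 1) \<le> \<sigma> (m - 1)"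
    and PD: "P_degr n (bsc_mix n p \<epsilon>) (bsc_mix m q \<sigma>)"
    and k: "one_matrix m n q p k"
    and k_col: "\<And>j. j < n \<Longrightarrow> (\<Sum>i<m. k i j * \<sigma> i) = p j * \<epsilon> j"
  shows
   "(\<forall>i' j'. i' < m \<and> j' + 1 < n \<and> k i' j' \<noteq> 0 \<and> \<sigma> i' \<ge> \<epsilon> (j' + 1) \<longrightarrow>
       (let k' = (\<lambda>i j. if i = i' \<and> j = j' then 0
                        else if i = i' \<and> j = j' + 1 then k i' (j' + 1) + k i' j'
                        else k i j)
        in P_degr n (bsc_mix n p \<epsilon>) (mat_channel m n \<sigma> k')
           \<and> P_degr n (mat_channel m n \<sigma> k') (bsc_mix m q \<sigma>)))
  \<and> (\<forall>i'' j''. i'' < m \<and> 1 \<le> j'' \<and> j'' < n \<and> k i'' j'' \<noteq> 0 \<and> \<sigma> i'' \<le> \<epsilon> (j'' - 1) \<longrightarrow>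
       (let k'' = (\<lambda>i j. if i = i'' \<and> j = j'' then 0
                        else if i = i'' \<and> j = j'' - 1 then k i'' (j'' - 1) + k i'' j''
                        else k i j)
        in P_degr n (bsc_mix n p \<epsilon>) (mat_channel m n \<sigma> k'')
           \<and> P_degr n (mat_channel m n \<sigma> k'') (bsc_mix m q \<sigma>)))
  \<and> (\<forall>i\<^sub>l i\<^sub>u j\<^sub>l j\<^sub>u. i\<^sub>l < m \<and> i\<^sub>u < m \<and> j\<^sub>l < n \<and> j\<^sub>u < n \<and>
        k i\<^sub>l j\<^sub>u * k i\<^sub>u j\<^sub>l \<noteq> 0 \<and>
        \<epsilon> j\<^sub>l \<le> \<sigma> i\<^sub>l \<and> \<sigma> i\<^sub>l < \<sigma> i\<^sub>u \<and> \<sigma> i\<^sub>u \<le> \<epsilon> j\<^sub>u \<longrightarrow>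
       (let \<delta> = min (k i\<^sub>l j\<^sub>u) (k i\<^sub>u j\<^sub>l);
            ks = (\<lambda>i j. k i j
                    - (if (i, j) = (i\<^sub>l, j\<^sub>u) then \<delta> else 0)
                    - (if (i, j) = (i\<^sub>u, j\<^sub>l) then \<delta> else 0)
                    + (if (i, j) = (i\<^sub>l, j\<^sub>l) then \<delta> else 0)
                    + (if (i, j) = (i\<^sub>u, j\<^sub>u) then \<delta> else 0))
        in P_degr n (bsc_mix n p \<epsilon>) (mat_channel m n \<sigma> ks)
           \<and> P_degr n (mat_channel m n \<sigma> ks) (bsc_mix m q \<sigma>)))"
proof -
  have \<sigma>_range: "0 \<le> \<sigma> i \<and> \<sigma> i \<le> 1" if "i < m" for i
  proof -
    have "\<sigma> 0 \<le> \<sigma> i" using \<sigma>_mono[of 0 i] that by (cases "i = 0") auto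
    moreover have "\<sigma> i \<le> \<sigma> (m - 1)"
    proof (cases "i < m - 1")
      case False
      with that have "i = m - 1" by linarith
      then show ?thesis by simp
    qed (use \<sigma>_mono that in \<open>auto intro: less_imp_le\<close>)
    ultimately show ?thesis using \<sigma>_lo \<sigma>_hi by linarith
  qed
  interpret one_matrix_degradation m n q \<sigma> p \<epsilon> k
    using q \<sigma>_range p p_pos PD k k_col by (simp add: one_matrix_degradation_def)
  show ?thesis
    unfolding Let_def
    apply (intro conjI[OF _ conjI] allI impI)
    subgoal by (rule P_degr_move_entry) (use \<epsilon>_mono in auto)
    subgoal by (rule P_degr_move_entry) (use \<epsilon>_mono in auto)
    subgoal by (rule P_degr_exchange) (use k_nonneg in auto)
    done
qed

end
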